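(* Suppose Assumption 1 holds. Let $\mathbf{x}^*\in\mathcal{X}_0$ satisfy $\mathbf{g}(\mathbf{x}^* )\le\mathbf{0}$ (componentwise). Let $\gamma>0$ and $\eta>0$ be arbitrary and suppose $\alpha\ge\frac12(\gamma^2\beta^2+\eta)$ in Algorithm 1. Then for all $t\ge1$, $$\Delta(t+1)+f^t(\mathbf{x}(t))\le f^t(\mathbf{x}^* )+\alpha\big[\|\mathbf{x}^*-\mathbf{x}(t)\|^2-\|\mathbf{x}^*-\mathbf{x}(t+1)\|^2\big]+\tfrac12\big[\|\tilde{\mathbf{g}}(\mathbf{x}(t+1))\|^2-\|\tilde{\mathbf{g}}(\mathbf{x}(t))\|^2\big]+\frac{D^2}{2\eta}.$$
   Context: Setting: $n,m$ positive integers; $\mathcal{X}_0\subset\mathbb{R}^n$ is a nonempty compact convex set; $\mathbf{g}=(g_1,\ldots,g_m)^{\mathsf T}:\mathbb{R}^n\to\mathbb{R}^m$ with each $g_k$ convex and continuous; $f^t$, $t=0,1,2,\ldots$, are convex differentiable real functions on (a neighborhood of) $\mathcal{X}_0$. All norms are Euclidean. Assumption 1: there are constants $D,\beta,G,R>0$ with $\|\nabla f^t(\mathbf{x})\|\le D$ for all $\mathbf{x}\in\mathcal{X}_0$ and all $t\ge0$; $\|\mathbf{g}(\mathbf{x})-\mathbf{g}(\mathbf{y})\|\le\beta\|\mathbf{x}-\mathbf{y}\|$ for all $\mathbf{x},\mathbf{y}\in\mathcal{X}_0$; $\|\mathbf{g}(\mathbf{x})\|\le G$ for all $\mathbf{x}\in\mathcal{X}_0$;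 $\|\mathbf{x}-\mathbf{y}\|\le R$ for all $\mathbf{x},\mathbf{y}\in\mathcal{X}_0$. Algorithm 1 (parameters $\gamma>0,\alpha>0$): let $\tilde{\mathbf{g}}(\mathbf{x})=\gamma\mathbf{g}(\mathbf{x})$. Choose any $\mathbf{x}(0)\in\mathcal{X}_0$ and set $Q_k(0)=0$ for all $k$. For each $t=0,1,2,\ldots$: set $Q_k(t+1)=\max\{-\tilde g_k(\mathbf{x}(t)),\,Q_k(t)+\tilde g_k(\mathbf{x}(t))\}$ for $k=1,\ldots,m$, and let $\mathbf{x}(t+1)$ be a minimizer over $\mathbf{x}\in\mathcal{X}_0$ of $[\nabla f^t(\mathbf{x}(t))]^{\mathsf T}(\mathbf{x}-\mathbf{x}(t))+[\mathbf{Q}(t+1)+\tilde{\mathbf{g}}(\mathbf{x}(t))]^{\mathsf T}\tilde{\mathbf{g}}(\mathbf{x})+\alpha\|\mathbf{x}-\mathbf{x}(t)\|^2$, where $\mathbf{Q}(t)=(Q_1(t),\ldots,Q_m(t))^{\mathsf T}$. Lyapunov function and drift: $L(t)=\tfrac12\|\mathbf{Q}(t)\|^2$ and $\Delta(t)=L(t+1)-L(t)$. *)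

theory Defs
  imports "HOL-Analysis.Analysis"
begin

text \<open>Algorithm 1. Vectors in R^n are real^'n, constraint vectors in R^m are real^'m.
  grad t x is the gradient of f^t at x. The run (x, Q) of the algorithm is any pair of
  sequences satisfying the update rules; x(t+1) is any minimizer of the per-slot objective.\<close>

definition alg1_obj ::
  "real \<Rightarrow> real \<Rightarrow> (real^'n \<Rightarrow> real^'m) \<Rightarrow> real^'n \<Rightarrow> real^'n \<Rightarrow> real^'m \<Rightarrow> real^'n \<Rightarrow> real"
  where "alg1_obj \<gamma> \<alpha> g gr xt Qnext y =
     gr \<bullet> (y - xt) + (Qnext + \<gamma> *\<^sub>R g xt) \<bullet> (\<gamma> *\<^sub>R g y) + \<alpha> * (norm (y - xt))\<^sup>2"

definition alg1_run ::
  "real \<Rightarrow> real \<Rightarrow> (real^'n) set \<Rightarrow> (real^'n \<Rightarrow> real^'m) \<Rightarrow> (nat \<Rightarrow> real^'n \<Rightarrow> real^'n)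
   \<Rightarrow> (nat \<Rightarrow> real^'n) \<Rightarrow> (nat \<Rightarrow> real^'m) \<Rightarrow> bool"
  where "alg1_run \<gamma> \<alpha> X0 g grad x Q \<longleftrightarrow>
     x 0 \<in> X0 \<and> Q 0 = 0 \<and>
     (\<forall>t. Q (Suc t) = (\<chi> k. max (- (\<gamma> * g (x t) $ k)) (Q t $ k + \<gamma> * g (x t) $ k))) \<and>
     (\<forall>t. x (Suc t) \<in> X0 \<and>
        (\<forall>y\<in>X0. alg1_obj \<gamma> \<alpha> g (grad t (x t)) (x t) (Q (Suc t)) (x (Suc t))
                  \<le> alg1_obj \<gamma> \<alpha> g (grad t (x t)) (x t) (Q (Suc t)) y))"

definition lyap :: "(nat \<Rightarrow> real^'m) \<Rightarrow> nat \<Rightarrow> real"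
  where "lyap Q t = (norm (Q t))\<^sup>2 / 2"

definition drift :: "(nat \<Rightarrow> real^'m) \<Rightarrow> nat \<Rightarrow> real"
  where "drift Q t = lyap Q (Suc t) - lyap Q t"

end

theory Submission
  imports Defs
begin

text \<open>Let \<open>w = Q(t+1) + \<gamma> g(x(t))\<close>. The queue update makes \<open>w\<close> componentwise nonnegative,
  so the per-slot objective is a convex function plus \<open>\<alpha> \<parallel>y - x(t)\<parallel>\<^sup>2\<close>, and its minimizer
  \<open>x(t+1)\<close> beats \<open>x\<^sup>*\<close> by the extra margin \<open>\<alpha> \<parallel>x\<^sup>* - x(t+1)\<parallel>\<^sup>2\<close>; moreover
  \<open>w \<bullet> \<gamma> g(x\<^sup>*) \<le> 0\<close>. Squaring the queue update bounds the drift \<open>\<Delta>(t+1)\<close> by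
  \<open>w \<bullet> \<gamma> g(x(t+1))\<close> plus the telescoping term and \<open>1/2 \<parallel>\<gamma> g(x(t+1)) - \<gamma> g(x(t))\<parallel>\<^sup>2\<close>. The latter
  and the linear term \<open>-\<nabla>f\<^sup>t \<bullet> (x(t+1) - x(t))\<close> are absorbed by \<open>\<alpha> \<parallel>x(t+1) - x(t)\<parallel>\<^sup>2\<close> via the
  Lipschitz bound and Young's inequality with parameter \<open>\<eta>\<close>, leaving \<open>D\<^sup>2/(2\<eta>)\<close>; the tangent
  inequality for the convex \<open>f\<^sup>t\<close> turns \<open>\<nabla>f\<^sup>t \<bullet> (x\<^sup>* - x(t))\<close> into \<open>f\<^sup>t(x\<^sup>*) - f\<^sup>t(x(t))\<close>.\<close>

lemma convex_on_imp_above_tangent_inner: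
  fixes f :: "'a::real_inner \<Rightarrow> real"
  assumes f: "convex_on U f" and c: "c \<in> U" and x: "x \<in> U"
    and deriv: "(f has_derivative (\<lambda>h. d \<bullet> h)) (at c)"
  shows "f c + d \<bullet> (x - c) \<le> f x"
proof -
  define v where "v = x - c"
  have "((\<lambda>s. c + s *\<^sub>R v) has_derivative (\<lambda>s. s *\<^sub>R v)) (at (0::real))"
    by (auto intro!: derivative_eq_intros)
  moreover have "(f has_derivative (\<lambda>h. d \<bullet> h)) (at (c + (0::real) *\<^sub>R v))"
    using deriv by simp
  ultimately have "((\<lambda>s. f (c + s *\<^sub>R v)) has_derivative (\<lambda>s. d \<bullet> (s *\<^sub>R v))) (at (0::real))"
    by (rule has_derivative_compose)
  then have "((\<lambda>s. f (c + s *\<^sub>R v)) has_field_derivative d \<bullet> v) (at 0)"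
    by (simp add: has_field_derivative_def mult.commute[of _ "d \<bullet> v"])
  then have "((\<lambda>s. (f (c + s *\<^sub>R v) - f c) / s) \<longlongrightarrow> d \<bullet> v) (at_right 0)"
    by (auto simp: has_field_derivative_iff intro: tendsto_mono at_le)
  moreover have "\<forall>\<^sub>F s in at_right 0. (f (c + s *\<^sub>R v) - f c) / s \<le> f x - f c"
    using eventually_at_right_real[OF zero_less_one]
  proof eventually_elim
    case (elim s)
    have "c + s *\<^sub>R v = (1 - s) *\<^sub>R c + s *\<^sub>R x"
      by (simp add: v_def algebra_simps)
    then have "f (c + s *\<^sub>R v) \<le> (1 - s) * f c + s * f x"
      using convex_onD[OF f, of s c x] elim c x by simp
    then have "f (c + s *\<^sub>R v) - f c \<le> (f x - f c) * s"
      by (simp add: algebra_simps)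
    with elim show ?case
      by (simp add: pos_divide_le_eq)
  qed
  ultimately have "d \<bullet> v \<le> f x - f c"
    by (simp add: tendsto_upperbound)
  then show ?thesis
    by (simp add: v_def)
qed

lemma convex_on_inner_diff:
  fixes d :: "'a::real_inner"
  assumes "convex S"
  shows "convex_on S (\<lambda>y. d \<bullet> (y - c))"
proof (rule convex_onI)
  fix t :: real and x y
  have "(1 - t) *\<^sub>R x + t *\<^sub>R y - c = (1 - t) *\<^sub>R (x - c) + t *\<^sub>R (y - c)"
    by (simp add: algebra_simps)
  then show "d \<bullet> ((1 - t) *\<^sub>R x + t *\<^sub>R y - c) \<le> (1 - t) * (d \<bullet> (x - c)) + t * (d \<bullet> (y - c))"
    by (simp add: inner_add_right)
qed (fact assms)

lemma convex_on_sum_fun: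
  assumes "finite I" "convex S" "\<And>i. i \<in> I \<Longrightarrow> convex_on S (f i)"
  shows "convex_on S (\<lambda>x. \<Sum>i\<in>I. f i x)"
  using assms by (induction I rule: finite_induct) (auto simp: convex_on_const)

lemma convex_on_inner_nonneg:
  fixes g :: "'a::real_vector \<Rightarrow> real^'m"
  assumes "convex S" "\<And>k. convex_on S (\<lambda>y. g y $ k)" "\<And>k. 0 \<le> c $ k"
  shows "convex_on S (\<lambda>y. c \<bullet> g y)"
  unfolding inner_vec_def inner_real_def
  using assms by (intro convex_on_sum_fun convex_on_cmul) auto

lemma norm_convex_combination_squared:
  fixes a b :: "'a::real_inner"
  shows "(norm ((1 - l) *\<^sub>R a + l *\<^sub>R b))\<^sup>2
         = (1 - l) * (norm a)\<^sup>2 + l * (norm b)\<^sup>2 - l * (1 - l) * (norm (a - b))\<^sup>2"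
  unfolding power2_norm_eq_inner
  by (simp add: inner_diff inner_add inner_commute algebra_simps)

text \<open>Compare \<open>x1\<close> with the points \<open>(1 - l) x1 + l y\<close> of the segment and let \<open>l \<rightarrow> 0\<close>.\<close>

lemma proximal_minimizer_le:
  fixes h :: "'a::real_inner \<Rightarrow> real"
  assumes h: "convex_on S h" and x1: "x1 \<in> S" and y: "y \<in> S"
    and min: "\<And>z. z \<in> S \<Longrightarrow> h x1 + \<alpha> * (norm (x1 - c))\<^sup>2 \<le> h z + \<alpha> * (norm (z - c))\<^sup>2"
  shows "h x1 + \<alpha> * (norm (x1 - c))\<^sup>2 + \<alpha> * (norm (y - x1))\<^sup>2 \<le> h y + \<alpha> * (norm (y - c))\<^sup>2"
proof -
  define \<phi> where "\<phi> z = h z + \<alpha> * (norm (z - c))\<^sup>2" for z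
  define N where "N = (norm (y - x1))\<^sup>2"
  have interpolate: "\<phi> x1 \<le> \<phi> y - \<alpha> * (1 - l) * N" if l: "0 < l" "l \<le> 1" for l
  proof -
    define z where "z = (1 - l) *\<^sub>R x1 + l *\<^sub>R y"
    have "z \<in> S"
      using convexD[OF convex_on_imp_convex[OF h] x1 y, of "1 - l" l] l by (simp add: z_def)
    then have "\<phi> x1 \<le> \<phi> z"
      using min by (simp add: \<phi>_def)
    moreover have "h z \<le> (1 - l) * h x1 + l * h y"
      using convex_onD[OF h, of l x1 y] l x1 y by (simp add: z_def)
    moreover have "z - c = (1 - l) *\<^sub>R (x1 - c) + l *\<^sub>R (y - c)"
      by (simp add: z_def algebra_simps)
    then have "(norm (z - c))\<^sup>2 = (1 - l) * (norm (x1 - c))\<^sup>2 + l * (norm (y - c))\<^sup>2 - l * (1 - l) * N"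
      by (simp add: norm_convex_combination_squared N_def norm_minus_commute)
    ultimately have "l * \<phi> x1 \<le> l * (\<phi> y - \<alpha> * (1 - l) * N)"
      by (simp add: \<phi>_def algebra_simps)
    with l show ?thesis
      by simp
  qed
  have "((\<lambda>l. \<phi> y - \<alpha> * (1 - l) * N) \<longlongrightarrow> \<phi> y - \<alpha> * (1 - 0) * N) (at_right 0)"
    by (intro tendsto_intros)
  moreover have "\<forall>\<^sub>F l in at_right 0. \<phi> x1 \<le> \<phi> y - \<alpha> * (1 - l) * N"
    using eventually_at_right_real[OF zero_less_one] by eventually_elim (use interpolate in auto)
  ultimately have "\<phi> x1 \<le> \<phi> y - \<alpha> * N"
    by (simp add: tendsto_lowerbound)
  then show ?thesis
    by (simp add: \<phi>_def N_def)
qed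

lemma inner_le_young:
  fixes u v :: "'a::real_inner"
  assumes "0 < \<eta>"
  shows "u \<bullet> v \<le> (norm u)\<^sup>2 / (2 * \<eta>) + \<eta> * (norm v)\<^sup>2 / 2"
proof -
  have "2 * \<eta> * (norm u * norm v) \<le> (norm u)\<^sup>2 + (\<eta> * norm v)\<^sup>2"
    using sum_squares_bound[of "norm u" "\<eta> * norm v"] by (simp add: algebra_simps)
  then have "norm u * norm v \<le> (norm u)\<^sup>2 / (2 * \<eta>) + \<eta> * (norm v)\<^sup>2 / 2"
    using assms by (simp add: field_simps power2_eq_square)
  then show ?thesis
    using norm_cauchy_schwarz[of u v] by linarith
qed

lemma young_absorb_le:
  fixes d v :: "'a::real_inner"
  assumes "0 < \<eta>" "norm d \<le> D" "0 \<le> e" "e \<le> L * norm v" "(L\<^sup>2 + \<eta>) / 2 \<le> \<alpha>"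
  shows "e\<^sup>2 / 2 - d \<bullet> v \<le> D\<^sup>2 / (2 * \<eta>) + \<alpha> * (norm v)\<^sup>2"
proof -
  have "e\<^sup>2 \<le> L\<^sup>2 * (norm v)\<^sup>2"
    using power_mono[OF assms(4) assms(3), of 2] by (simp add: power_mult_distrib)
  moreover have "(norm d)\<^sup>2 / (2 * \<eta>) \<le> D\<^sup>2 / (2 * \<eta>)"
    using assms(1,2) by (intro divide_right_mono power_mono) auto
  moreover have "(L\<^sup>2 + \<eta>) / 2 * (norm v)\<^sup>2 \<le> \<alpha> * (norm v)\<^sup>2"
    using assms(5) by (rule mult_right_mono) simp
  ultimately show ?thesis
    using inner_le_young[OF assms(1), of "- d" v] by (simp add: algebra_simps)
qed

definition queue_update :: "real^'m \<Rightarrow> real^'m \<Rightarrow> real^'m"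
  where "queue_update a q = (\<chi> k. max (- a $ k) (q $ k + a $ k))"

lemma queue_update_add_nonneg: "0 \<le> (queue_update a q + a) $ k"
  by (simp add: queue_update_def)

lemma norm_queue_update_le: "(norm (queue_update a q))\<^sup>2 \<le> (norm (q + a))\<^sup>2 + (norm a)\<^sup>2"
proof -
  have "(norm (queue_update a q))\<^sup>2 = (\<Sum>k\<in>UNIV. (max (- a $ k) (q $ k + a $ k))\<^sup>2)"
    unfolding power2_norm_eq_inner by (simp add: inner_vec_def queue_update_def power2_eq_square)
  also have "\<dots> \<le> (\<Sum>k\<in>UNIV. (q $ k + a $ k)\<^sup>2 + (a $ k)\<^sup>2)"
    by (intro sum_mono) (simp add: max_def)
  also have "\<dots> = (norm (q + a))\<^sup>2 + (norm a)\<^sup>2"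
    unfolding power2_norm_eq_inner by (simp add: inner_vec_def sum.distrib power2_eq_square)
  finally show ?thesis .
qed

lemma queue_update_drift_le:
  "((norm (queue_update b q))\<^sup>2 - (norm q)\<^sup>2) / 2
   \<le> (q + a) \<bullet> b + ((norm b)\<^sup>2 - (norm a)\<^sup>2) / 2 + (norm (b - a))\<^sup>2 / 2"
proof -
  have "(norm (q + b))\<^sup>2 + (norm b)\<^sup>2 - (norm q)\<^sup>2
        = 2 * ((q + a) \<bullet> b) + (norm b)\<^sup>2 - (norm a)\<^sup>2 + (norm (b - a))\<^sup>2"
    unfolding power2_norm_eq_inner by (simp add: inner_simps inner_commute algebra_simps)
  with norm_queue_update_le[of b q] show ?thesis
    by (simp add: field_simps)
qed

lemma alg1_run_queue:
  "alg1_run \<gamma> \<alpha> X0 g grad x Q \<Longrightarrow> Q (Suc t) = queue_update (\<gamma> *\<^sub>R g (x t)) (Q t)"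
  by (simp add: alg1_run_def queue_update_def)

lemma alg1_run_in: "alg1_run \<gamma> \<alpha> X0 g grad x Q \<Longrightarrow> x t \<in> X0"
  by (cases t) (simp_all add: alg1_run_def)

lemma alg1_run_minimizer:
  "alg1_run \<gamma> \<alpha> X0 g grad x Q \<Longrightarrow> y \<in> X0 \<Longrightarrow>
   alg1_obj \<gamma> \<alpha> g (grad t (x t)) (x t) (Q (Suc t)) (x (Suc t))
   \<le> alg1_obj \<gamma> \<alpha> g (grad t (x t)) (x t) (Q (Suc t)) y"
  unfolding alg1_run_def by blast

lemma alg1_run_multiplier_nonneg:
  assumes "alg1_run \<gamma> \<alpha> X0 g grad x Q"
  shows "0 \<le> (Q (Suc t) + \<gamma> *\<^sub>R g (x t)) $ k"
  using queue_update_add_nonneg[of "\<gamma> *\<^sub>R g (x t)" "Q t" k]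
  by (simp add: alg1_run_queue[OF assms])

lemma alg1_run_drift_le:
  assumes "alg1_run \<gamma> \<alpha> X0 g grad x Q"
  shows "drift Q (Suc t)
         \<le> (Q (Suc t) + \<gamma> *\<^sub>R g (x t)) \<bullet> (\<gamma> *\<^sub>R g (x (Suc t)))
           + ((norm (\<gamma> *\<^sub>R g (x (Suc t))))\<^sup>2 - (norm (\<gamma> *\<^sub>R g (x t)))\<^sup>2) / 2
           + (norm (\<gamma> *\<^sub>R g (x (Suc t)) - \<gamma> *\<^sub>R g (x t)))\<^sup>2 / 2"
  using queue_update_drift_le[of "\<gamma> *\<^sub>R g (x (Suc t))" "Q (Suc t)" "\<gamma> *\<^sub>R g (x t)"]
  by (simp add: drift_def lyap_def diff_divide_distrib alg1_run_queue[OF assms, of "Suc t"])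

lemma alg1_run_proximal_le:
  assumes run: "alg1_run \<gamma> \<alpha> X0 g grad x Q" and "convex X0" and "0 \<le> \<gamma>"
    and g_convex: "\<And>k. convex_on UNIV (\<lambda>y. g y $ k)" and y: "y \<in> X0"
  shows "alg1_obj \<gamma> \<alpha> g (grad t (x t)) (x t) (Q (Suc t)) (x (Suc t)) + \<alpha> * (norm (y - x (Suc t)))\<^sup>2
         \<le> alg1_obj \<gamma> \<alpha> g (grad t (x t)) (x t) (Q (Suc t)) y"
proof -
  define w where "w = \<gamma> *\<^sub>R (Q (Suc t) + \<gamma> *\<^sub>R g (x t))"
  define h where "h z = grad t (x t) \<bullet> (z - x t) + w \<bullet> g z" for z
  have obj: "alg1_obj \<gamma> \<alpha> g (grad t (x t)) (x t) (Q (Suc t)) z = h z + \<alpha> * (norm (z - x t))\<^sup>2" for z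
    by (simp add: alg1_obj_def h_def w_def)
  have "0 \<le> w $ k" for k
    using alg1_run_multiplier_nonneg[OF run] \<open>0 \<le> \<gamma>\<close> by (simp add: w_def)
  then have "convex_on UNIV (\<lambda>z. w \<bullet> g z)"
    by (rule convex_on_inner_nonneg[OF convex_UNIV g_convex])
  then have "convex_on X0 h"
    unfolding h_def using \<open>convex X0\<close>
    by (intro convex_on_add convex_on_inner_diff) (auto intro: convex_on_subset)
  then show ?thesis
    using alg1_run_minimizer[OF run, of _ t] alg1_run_in[OF run] y
    unfolding obj by (intro proximal_minimizer_le) auto
qed

theorem lemma8:
  fixes X0 :: "(real^'n) set"
    and g :: "real^'n \<Rightarrow> real^'m"
    and f :: "nat \<Rightarrow> real^'n \<Rightarrow> real"
    and grad :: "nat \<Rightarrow> real^'n \<Rightarrow> real^'n"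
    and x :: "nat \<Rightarrow> real^'n"
    and Q :: "nat \<Rightarrow> real^'m"
    and xs :: "real^'n"
    and D \<beta> G R \<gamma> \<eta> \<alpha> :: real
  assumes X0: "X0 \<noteq> {}" "compact X0" "convex X0"
    and g_convex: "\<And>k. convex_on UNIV (\<lambda>y. g y $ k)"
    and g_cont: "continuous_on UNIV g"
    and f_diff: "\<And>t. \<exists>U. open U \<and> convex U \<and> X0 \<subseteq> U \<and> convex_on U (f t) \<and>
                   (\<forall>y\<in>U. (f t has_derivative (\<lambda>h. grad t y \<bullet> h)) (at y))"
    and consts_pos: "D > 0" "\<beta> > 0" "G > 0" "R > 0"
    and grad_bd: "\<And>t y. y \<in> X0 \<Longrightarrow> norm (grad t y) \<le> D"
    and g_lip: "\<And>y z. y \<in> X0 \<Longrightarrow> z \<in> X0 \<Longrightarrow> norm (g y - g z) \<le> \<beta> * norm (y - z)"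
    and g_bd: "\<And>y. y \<in> X0 \<Longrightarrow> norm (g y) \<le> G"
    and diam: "\<And>y z. y \<in> X0 \<Longrightarrow> z \<in> X0 \<Longrightarrow> norm (y - z) \<le> R"
    and xs: "xs \<in> X0" "\<And>k. g xs $ k \<le> 0"
    and params: "\<gamma> > 0" "\<eta> > 0" "\<alpha> \<ge> (\<gamma>\<^sup>2 * \<beta>\<^sup>2 + \<eta>) / 2"
    and run: "alg1_run \<gamma> \<alpha> X0 g grad x Q"
    and t: "t \<ge> 1"
  shows "drift Q (t + 1) + f t (x t)
         \<le> f t xs + \<alpha> * ((norm (xs - x t))\<^sup>2 - (norm (xs - x (t + 1)))\<^sup>2)
           + ((norm (\<gamma> *\<^sub>R g (x (t + 1))))\<^sup>2 - (norm (\<gamma> *\<^sub>R g (x t)))\<^sup>2) / 2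
           + D\<^sup>2 / (2 * \<eta>)"
proof -
  have xt: "x t \<in> X0" and x1: "x (t + 1) \<in> X0"
    using alg1_run_in[OF run] by auto
  obtain U where U: "X0 \<subseteq> U" "convex_on U (f t)" "\<forall>y\<in>U. (f t has_derivative (\<lambda>h. grad t y \<bullet> h)) (at y)"
    using f_diff[of t] by blast
  have tangent: "f t (x t) + grad t (x t) \<bullet> (xs - x t) \<le> f t xs"
    using U xt xs(1) by (auto intro!: convex_on_imp_above_tangent_inner)
  have "(Q (t + 1) + \<gamma> *\<^sub>R g (x t)) \<bullet> (\<gamma> *\<^sub>R g xs) \<le> 0"
    using alg1_run_multiplier_nonneg[OF run, of t] xs(2) params(1) unfolding inner_vec_def
    by (auto intro!: sum_nonpos mult_nonneg_nonpos)
  moreover have "norm (\<gamma> *\<^sub>R g (x (t + 1)) - \<gamma> *\<^sub>R g (x t)) \<le> \<gamma> * \<beta> * norm (x (t + 1) - x t)"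
    using g_lip[OF x1 xt] params(1) by (simp add: mult.assoc flip: scaleR_diff_right)
  then have "(norm (\<gamma> *\<^sub>R g (x (t + 1)) - \<gamma> *\<^sub>R g (x t)))\<^sup>2 / 2 - grad t (x t) \<bullet> (x (t + 1) - x t)
             \<le> D\<^sup>2 / (2 * \<eta>) + \<alpha> * (norm (x (t + 1) - x t))\<^sup>2"
    using grad_bd[OF xt] params by (intro young_absorb_le) (auto simp: power_mult_distrib)
  ultimately show ?thesis
    using tangent alg1_run_proximal_le[OF run X0(3) less_imp_le[OF params(1)] g_convex xs(1), of t]
      alg1_run_drift_le[OF run, of t]
    unfolding alg1_obj_def Suc_eq_plus1 right_diff_distrib by linarith
qed

end
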